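(* Let $\boldsymbol{\mathcal V}(x)=\sum_{n\ge0}x^n\sum_{r\in\mathcal V_n}\overline{\d}(r)$. Then \[ \boldsymbol{\mathcal V}=2x\boldsymbol{\mathcal V}+2x^2\boldsymbol{\mathcal M}(x,1)\mathcal V+2x^2\mathcal M(x,1)\boldsymbol{\mathcal V}+2x^2\mathcal V\,\tfrac{\partial}{\partial x}\big(x\mathcal M(x,1)\big)+2x\boldsymbol{\mathcal N}+2x\,\tfrac{\partial}{\partial x}\big(x\mathcal N\big), \] and explicitly \[ \boldsymbol{\mathcal V}(x)=\frac{8x\left(1+\sqrt{1-4x}-x\big(3+\sqrt{1-4x}\big)\right)}{(1-4x)\big(1-4x+\sqrt{1-4x}\big)^3}. \]
   Context: Steps: $U=(1,1)$, $D=(1,-1)$, two distinguishable copies $O_1,O_2$ of $(1,0)$. $\mathcal V_n$: paths starting at $(0,0)$ with $n$ steps in $\{U,D,O_1,O_2\}$, ending anywhere; $\mathcal N_n\subseteq\mathcal V_n$: those staying weakly above the $x$-axis. For a path $r$ with heights $r_0=0,\dots,r_n$, $\overline{\d}(r)=\sum_{i=0}^n|r_i|$. $\mathcal V(x)=\sum|\mathcal V_n|x^n$, $\mathcal N(x)=\sum|\mathcal N_n|x^n$, $\boldsymbol{\mathcal N}(x)=\sum_n x^n\sum_{r\in\mathcal N_n}\overline{\d}(r)$; $\mathcal M(x,1)$ and $\boldsymbol{\mathcal M}(x,1)$ are the generating functions by length, respectively unweighted and weighted by $\overline{\d}$, of paths in $\bigcup_n\mathcal N_n$ that end on the $x$-axis.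 *)

theory Defs
  imports Complex_Main "HOL-Computational_Algebra.Formal_Power_Series"
begin

text \<open>Steps U=(1,1), D=(1,-1), and two distinguishable copies O1, O2 of (1,0).\<close>
datatype step = U | D | O1 | O2

fun step_height :: "step \<Rightarrow> int" where
  "step_height U = 1"
| "step_height D = -1"
| "step_height O1 = 0"
| "step_height O2 = 0"

text \<open>A path with n steps is a list of steps of length n, starting at (0,0).
  Its height after i steps (0 \<le> i \<le> n) is r_i.\<close>
definition height :: "step list \<Rightarrow> nat \<Rightarrow> int" where
  "height r i = sum_list (map step_height (take i r))"

definition dbar :: "step list \<Rightarrow> nat" where
  "dbar r = (\<Sum>i\<le>length r. nat \<bar>height r i\<bar>)"

definition Vset :: "nat \<Rightarrow> step list set" where
  "Vset n = {r. length r = n}"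

definition Nset :: "nat \<Rightarrow> step list set" where
  "Nset n = {r \<in> Vset n. \<forall>i\<le>n. height r i \<ge> 0}"

definition Mset :: "nat \<Rightarrow> step list set" where
  "Mset n = {r \<in> Nset n. height r n = 0}"

definition gf :: "(nat \<Rightarrow> step list set) \<Rightarrow> real fps" where
  "gf S = Abs_fps (\<lambda>n. real (card (S n)))"

definition wgf :: "(nat \<Rightarrow> step list set) \<Rightarrow> real fps" where
  "wgf S = Abs_fps (\<lambda>n. real (\<Sum>r\<in>S n. dbar r))"

end

theory Submission
  imports Defs "HOL-Analysis.Generalised_Binomial_Theorem"
begin

text \<open>
  Split a path by its first step. Level steps do not change \<open>dbar\<close>, and a path starting with
  \<open>D\<close> is the mirror image of one starting with \<open>U\<close>. After an initial \<open>U\<close>, either the rest of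
  the path stays weakly above the axis and is merely lifted by one, or it decomposes uniquely as
  \<open>U a D b\<close> with \<open>a\<close> ending on the axis without going below it; then
  \<open>dbar (U a D b) = |a| + 1 + dbar a + dbar b\<close>. Reading this off coefficientwise gives the
  functional equation.

  For the explicit form, split instead by the last step. Paths of length \<open>n\<close> ending at height
  \<open>h\<close> are counted by \<open>2n choose n + h\<close>, so the sum \<open>E(n)\<close> of the absolute final heights
  satisfies \<open>E(n + 1) = 4 E(n) + 2 (2n choose n)\<close>, whence \<open>E(n) = n (2n choose n)\<close>. Then
  \<open>W(n + 1) = 4 W(n) + E(n + 1)\<close> for the coefficients \<open>W(n)\<close> of the weighted series gives
  \<open>3 W(n) = n (2n + 1) (2n choose n)\<close>, the coefficients of \<open>2x (1 - 4x) powr (-5/2)\<close>, and the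
  latter is the stated closed form.
\<close>

fun abs_heights :: "int \<Rightarrow> step list \<Rightarrow> nat" where
  "abs_heights c [] = 0"
| "abs_heights c (s # r) = nat \<bar>c + step_height s\<bar> + abs_heights (c + step_height s) r"

fun nonneg_from :: "int \<Rightarrow> step list \<Rightarrow> bool" where
  "nonneg_from c [] = True"
| "nonneg_from c (s # r) = (0 \<le> c + step_height s \<and> nonneg_from (c + step_height s) r)"

definition final_height :: "step list \<Rightarrow> int" where
  "final_height r = sum_list (map step_height r)"

lemma final_height_simps [simp]:
  "final_height [] = 0"
  "final_height (s # r) = step_height s + final_height r"
  "final_height (a @ b) = final_height a + final_height b"
  by (simp_all add: final_height_def)

lemma height_0 [simp]: "height r 0 = 0"
  by (simp add: height_def)

lemma height_Cons_Suc [simp]: "height (s # r) (Suc i) = step_height s + height r i"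
  by (simp add: height_def)

lemma height_length [simp]: "height r (length r) = final_height r"
  by (simp add: height_def final_height_def)

lemma all_atMost_Suc_iff: "(\<forall>i\<le>Suc m. P i) \<longleftrightarrow> P 0 \<and> (\<forall>i\<le>m. P (Suc i))"
  by (metis Suc_le_mono le0 not0_implies_Suc)

lemma all_heights_nonneg_iff:
  "(\<forall>i\<le>length r. 0 \<le> c + height r i) \<longleftrightarrow> 0 \<le> c \<and> nonneg_from c r"
proof (induction r arbitrary: c)
  case (Cons s r)
  show ?case
    unfolding length_Cons all_atMost_Suc_iff height_0 height_Cons_Suc
    using Cons.IH[of "c + step_height s"] by (auto simp: add.assoc)
qed simp

lemma sum_abs_heights:
  "(\<Sum>i\<le>length r. nat \<bar>c + height r i\<bar>) = nat \<bar>c\<bar> + abs_heights c r"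
proof (induction r arbitrary: c)
  case (Cons s r)
  show ?case
    unfolding length_Cons sum.atMost_Suc_shift height_0 height_Cons_Suc
    using Cons.IH[of "c + step_height s"] by (simp add: add.assoc)
qed simp

lemma dbar_eq_abs_heights: "dbar r = abs_heights 0 r"
  using sum_abs_heights[where r = r and c = 0] by (simp add: dbar_def)

lemma abs_heights_append:
  "abs_heights c (a @ b) = abs_heights c a + abs_heights (c + final_height a) b"
  by (induction a arbitrary: c) (auto simp: add.assoc)

lemma nonneg_from_append:
  "nonneg_from c (a @ b) \<longleftrightarrow> nonneg_from c a \<and> nonneg_from (c + final_height a) b"
  by (induction a arbitrary: c) (auto simp: add.assoc)

lemma Nset_eq: "Nset n = {r. length r = n \<and> nonneg_from 0 r}"
  using all_heights_nonneg_iff[where c = 0] by (auto simp: Nset_def Vset_def)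

lemma Mset_eq: "Mset n = {r. length r = n \<and> nonneg_from 0 r \<and> final_height r = 0}"
  by (auto simp: Mset_def Nset_eq)

lemma Vset_0: "Vset 0 = {[]}"
  by (auto simp: Vset_def)

lemma UNIV_step: "(UNIV :: step set) = {U, D, O1, O2}"
  using step.exhaust by auto

lemma finite_Vset [simp]: "finite (Vset n)"
proof -
  have "finite (UNIV :: step set)"
    by (simp add: UNIV_step)
  from finite_lists_length_eq[OF this, of n] show ?thesis
    by (simp add: Vset_def)
qed

lemma finite_Nset [simp]: "finite (Nset n)"
  by (simp add: Nset_def)

lemma finite_Mset [simp]: "finite (Mset n)"
  by (simp add: Mset_def)

lemma sum_Vset_Suc_Cons:
  "(\<Sum>r\<in>Vset (Suc n). f r) = (\<Sum>r\<in>Vset n. f (U # r) + f (D # r) + f (O1 # r) + f (O2 # r))"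
proof -
  have "bij_betw (\<lambda>(s, r). s # r) (UNIV \<times> Vset n) (Vset (Suc n))"
    by (auto simp: bij_betw_def inj_on_def Vset_def image_def length_Suc_conv)
  then have "(\<Sum>r\<in>Vset (Suc n). f r) = (\<Sum>s\<in>UNIV. \<Sum>r\<in>Vset n. f (s # r))"
    by (simp add: sum.reindex_bij_betw[symmetric] sum.cartesian_product case_prod_unfold)
  then show ?thesis
    by (simp add: UNIV_step sum.distrib add.assoc)
qed

lemma sum_Vset_Suc_snoc:
  "(\<Sum>r\<in>Vset (Suc n). f r) = (\<Sum>r\<in>Vset n. f (r @ [U]) + f (r @ [D]) + f (r @ [O1]) + f (r @ [O2]))"
proof -
  have "bij_betw (\<lambda>(s, r). r @ [s]) (UNIV \<times> Vset n) (Vset (Suc n))"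
    by (auto simp: bij_betw_def inj_on_def Vset_def image_def length_Suc_conv_rev)
  then have "(\<Sum>r\<in>Vset (Suc n). f r) = (\<Sum>s\<in>UNIV. \<Sum>r\<in>Vset n. f (r @ [s]))"
    by (simp add: sum.reindex_bij_betw[symmetric] sum.cartesian_product case_prod_unfold)
  then show ?thesis
    by (simp add: UNIV_step sum.distrib add.assoc)
qed

lemma gf_nth: "fps_nth (gf S) n = real (card (S n))"
  by (simp add: gf_def)

lemma wgf_nth: "fps_nth (wgf S) n = (\<Sum>r\<in>S n. real (dbar r))"
  by (simp add: wgf_def)

section \<open>First-return decomposition\<close>

lemma first_return_exists:
  assumes "0 \<le> c" and "\<not> nonneg_from c r"
  shows "\<exists>a b. r = a @ D # b \<and> nonneg_from c a \<and> c + final_height a = 0"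
  using assms
proof (induction r arbitrary: c)
  case (Cons s r)
  show ?case
  proof (cases "0 \<le> c + step_height s")
    case True
    moreover have "\<not> nonneg_from (c + step_height s) r"
      using Cons.prems True by simp
    ultimately obtain a b where
      "r = a @ D # b" "nonneg_from (c + step_height s) a" "c + step_height s + final_height a = 0"
      using Cons.IH by metis
    then have "s # r = (s # a) @ D # b" "nonneg_from c (s # a)" "c + final_height (s # a) = 0"
      using True by (simp_all add: add.assoc)
    then show ?thesis
      by blast
  next
    case False
    with Cons.prems(1) have "s = D"
      by (cases s) auto
    with False Cons.prems(1) have "c = 0"
      by simp
    with \<open>s = D\<close> show ?thesis
      by (intro exI[of _ "[]"] exI[of _ r]) simp
  qed
qed simp

lemma first_return_unique:
  assumes "nonneg_from c a" "c + final_height a = 0"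
    and "nonneg_from c a'" "c + final_height a' = 0"
    and "a @ D # b = a' @ D # b'"
  shows "a = a' \<and> b = b'"
  using assms
proof (induction a arbitrary: c a')
  case Nil
  then show ?case
    by (cases a') auto
next
  case (Cons s a)
  then show ?case
    by (cases a') (auto simp: add.assoc)
qed

text \<open>\<open>a\<close> is the part before the first visit to level \<open>-1\<close>.\<close>
lemma bij_betw_first_return:
  "bij_betw (\<lambda>(k, a, b). a @ D # b)
     (SIGMA k:{..<m}. Mset k \<times> Vset (m - 1 - k)) (Vset m - Nset m)"
proof (rule bij_betw_imageI)
  show "inj_on (\<lambda>(k, a, b). a @ D # b) (SIGMA k:{..<m}. Mset k \<times> Vset (m - 1 - k))"
  proof (rule inj_onI)
    fix x y
    assume "x \<in> (SIGMA k:{..<m}. Mset k \<times> Vset (m - 1 - k))"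
      and "y \<in> (SIGMA k:{..<m}. Mset k \<times> Vset (m - 1 - k))"
      and "(\<lambda>(k, a, b). a @ D # b) x = (\<lambda>(k, a, b). a @ D # b) y"
    moreover obtain k a b k' a' b' where xy: "x = (k, a, b)" "y = (k', a', b')"
      by (metis prod_cases3)
    ultimately have "a \<in> Mset k" "a' \<in> Mset k'" "a @ D # b = a' @ D # b'"
      by auto
    moreover from this have "a = a' \<and> b = b'"
      using first_return_unique[of 0 a a' b b'] by (simp add: Mset_eq)
    ultimately show "x = y"
      using xy by (auto simp: Mset_eq)
  qed
  show "(\<lambda>(k, a, b). a @ D # b) ` (SIGMA k:{..<m}. Mset k \<times> Vset (m - 1 - k)) = Vset m - Nset m"
  proof (intro equalityI subsetI)
    fix r
    assume "r \<in> Vset m - Nset m"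
    then have r: "length r = m" "\<not> nonneg_from 0 r"
      by (auto simp: Nset_eq Vset_def)
    then obtain a b where ab: "r = a @ D # b" "nonneg_from 0 a" "final_height a = 0"
      using first_return_exists[of 0 r] by auto
    with r(1) have "(length a, a, b) \<in> (SIGMA k:{..<m}. Mset k \<times> Vset (m - 1 - k))"
      by (auto simp: Mset_eq Vset_def)
    with ab(1) show "r \<in> (\<lambda>(k, a, b). a @ D # b) ` (SIGMA k:{..<m}. Mset k \<times> Vset (m - 1 - k))"
      by force
  next
    fix r
    assume "r \<in> (\<lambda>(k, a, b). a @ D # b) ` (SIGMA k:{..<m}. Mset k \<times> Vset (m - 1 - k))"
    then obtain k a b where "r = a @ D # b" "k < m" "a \<in> Mset k" "b \<in> Vset (m - 1 - k)"
      by auto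
    then show "r \<in> Vset m - Nset m"
      by (auto simp: Nset_eq Mset_eq Vset_def nonneg_from_append)
  qed
qed

lemma abs_heights_lift:
  assumes "nonneg_from c r" "0 \<le> c" "0 \<le> d"
  shows "abs_heights (c + d) r = nat d * length r + abs_heights c r"
  using assms
proof (induction r arbitrary: c)
  case (Cons s r)
  let ?c' = "c + step_height s"
  have "abs_heights (c + d) (s # r) = nat (?c' + d) + abs_heights (?c' + d) r"
    using Cons.prems by (simp add: algebra_simps)
  also have "\<dots> = nat ?c' + nat d + nat d * length r + abs_heights ?c' r"
    using Cons by (simp add: nat_add_distrib)
  finally show ?case
    using Cons.prems by simp
qed simp

lemma dbar_U_Mset_D:
  assumes "a \<in> Mset k"
  shows "dbar (U # a @ D # b) = k + 1 + dbar a + dbar b"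
  using assms abs_heights_lift[of 0 a 1]
  by (simp add: Mset_eq dbar_eq_abs_heights abs_heights_append)

lemma dbar_U_Nset:
  assumes "r \<in> Nset m"
  shows "dbar (U # r) = m + 1 + dbar r"
  using assms abs_heights_lift[of 0 r 1] by (simp add: Nset_eq dbar_eq_abs_heights)

fun mirror_step :: "step \<Rightarrow> step" where
  "mirror_step U = D"
| "mirror_step D = U"
| "mirror_step O1 = O1"
| "mirror_step O2 = O2"

lemma mirror_step_mirror_step [simp]: "mirror_step (mirror_step s) = s"
  by (cases s) auto

lemma step_height_mirror_step [simp]: "step_height (mirror_step s) = - step_height s"
  by (cases s) auto

lemma abs_heights_mirror: "abs_heights c (map mirror_step r) = abs_heights (- c) r"
proof (induction r arbitrary: c)
  case (Cons s r)
  have "\<bar>c - step_height s\<bar> = \<bar>- c + step_height s\<bar>"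
    by simp
  with Cons show ?case
    by simp
qed simp

lemma sum_Vset_mirror: "(\<Sum>r\<in>Vset m. f (map mirror_step r)) = (\<Sum>r\<in>Vset m. f r)"
  by (rule sum.reindex_bij_witness[where i = "map mirror_step" and j = "map mirror_step"])
     (auto simp: Vset_def comp_def)

lemma fps_deriv_X_mult_nth:
  "fps_nth (fps_deriv (fps_X * f)) k = of_nat (k + 1) * fps_nth (f :: 'a :: comm_ring_1 fps) k"
  unfolding fps_deriv_nth fps_X_mult_nth by simp

lemma sum_dbar_U_first_return:
  "(\<Sum>r\<in>Vset m - Nset m. real (dbar (U # r))) =
     fps_nth (fps_X * (wgf Mset * gf Vset + gf Mset * wgf Vset
                       + fps_deriv (fps_X * gf Mset) * gf Vset)) m"
proof (cases m)
  case 0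
  then show ?thesis
    by (simp add: Vset_0 Nset_eq)
next
  case (Suc p)
  let ?I = "SIGMA k:{..p}. Mset k \<times> Vset (p - k)"
  have "(\<Sum>r\<in>Vset m - Nset m. real (dbar (U # r)))
      = (\<Sum>(k, a, b)\<in>?I. real (dbar (U # a @ D # b)))"
    using sum.reindex_bij_betw[OF bij_betw_first_return[of "Suc p"], of "\<lambda>r. real (dbar (U # r))"]
      Suc
    by (simp add: case_prod_unfold lessThan_Suc_atMost)
  also have "\<dots> = (\<Sum>k\<le>p. \<Sum>(a, b)\<in>Mset k \<times> Vset (p - k).
                        real (k + 1) + real (dbar a) + real (dbar b))"
    by (subst sum.Sigma[symmetric]) (auto simp: dbar_U_Mset_D intro!: sum.cong)
  also have "\<dots> = (\<Sum>k\<le>p. fps_nth (wgf Mset) k * fps_nth (gf Vset) (p - k)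
                         + fps_nth (gf Mset) k * fps_nth (wgf Vset) (p - k)
                         + fps_nth (fps_deriv (fps_X * gf Mset)) k * fps_nth (gf Vset) (p - k))"
    unfolding fps_deriv_X_mult_nth gf_nth wgf_nth
    by (intro sum.cong refl)
       (simp add: sum.cartesian_product[symmetric] sum.distrib sum_distrib_left sum_distrib_right
         algebra_simps)
  finally show ?thesis
    unfolding Suc fps_X_mult_nth
    by (simp only: nat.simps if_False diff_Suc_1 fps_add_nth fps_mult_nth atLeast0AtMost
        sum.distrib)
qed

lemma wgf_Vset_Suc:
  "fps_nth (wgf Vset) (Suc m) = 2 * fps_nth (wgf Vset) m + 2 * fps_nth (wgf Nset) m
     + 2 * real (m + 1) * fps_nth (gf Nset) m
     + 2 * fps_nth (fps_X * (wgf Mset * gf Vset + gf Mset * wgf Vset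
                            + fps_deriv (fps_X * gf Mset) * gf Vset)) m"
proof -
  have level: "dbar (O1 # r) = dbar r" "dbar (O2 # r) = dbar r" for r
    by (simp_all add: dbar_eq_abs_heights)
  have down: "dbar (D # r) = dbar (U # map mirror_step r)" for r
    by (simp add: dbar_eq_abs_heights abs_heights_mirror)
  have up: "(\<Sum>r\<in>Vset m. real (dbar (U # r))) =
      (\<Sum>r\<in>Nset m. real (dbar (U # r))) + (\<Sum>r\<in>Vset m - Nset m. real (dbar (U # r)))"
  proof -
    have "Nset m \<subseteq> Vset m"
      by (simp add: Nset_def)
    then show ?thesis
      by (metis add.commute finite_Vset sum.subset_diff)
  qed
  have "(\<Sum>r\<in>Nset m. real (dbar (U # r)))
      = real (m + 1) * fps_nth (gf Nset) m + fps_nth (wgf Nset) m"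
    by (simp add: gf_nth wgf_nth dbar_U_Nset sum.distrib algebra_simps cong: sum.cong)
  moreover have "fps_nth (wgf Vset) (Suc m)
      = 2 * (\<Sum>r\<in>Vset m. real (dbar (U # r))) + 2 * fps_nth (wgf Vset) m"
    using sum_Vset_mirror[of "\<lambda>r. real (dbar (U # r))" m]
    by (simp add: wgf_nth sum_Vset_Suc_Cons level down sum.distrib sum_distrib_left)
  ultimately show ?thesis
    unfolding up sum_dbar_U_first_return by (simp add: algebra_simps)
qed

lemma fps_numeral_mult_nth:
  "fps_nth (numeral c * f) n = numeral c * fps_nth (f :: 'a :: comm_ring_1 fps) n"
  by (simp add: numeral_fps_const)

lemma functional_equation_factored:
  fixes X v w n dn a b c :: "'a :: comm_ring_1"
  shows "2 * X * w + 2 * X ^ 2 * a * v + 2 * X ^ 2 * b * w + 2 * X ^ 2 * v * c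
           + 2 * X * n + 2 * X * dn
       = X * (2 * w + 2 * n + 2 * dn + 2 * (X * (a * v + b * w + c * v)))"
  by (simp add: power2_eq_square algebra_simps)

lemma functional_equation:
  "wgf Vset = 2 * fps_X * wgf Vset
            + 2 * fps_X ^ 2 * wgf Mset * gf Vset
            + 2 * fps_X ^ 2 * gf Mset * wgf Vset
            + 2 * fps_X ^ 2 * gf Vset * fps_deriv (fps_X * gf Mset)
            + 2 * fps_X * wgf Nset
            + 2 * fps_X * fps_deriv (fps_X * gf Nset)"
  unfolding functional_equation_factored
proof (rule fps_ext)
  fix n
  show "fps_nth (wgf Vset) n =
    fps_nth (fps_X * (2 * wgf Vset + 2 * wgf Nset + 2 * fps_deriv (fps_X * gf Nset)
      + 2 * (fps_X * (wgf Mset * gf Vset + gf Mset * wgf Vset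
                      + fps_deriv (fps_X * gf Mset) * gf Vset)))) n"
  proof (cases n)
    case 0
    then show ?thesis
      by (simp add: wgf_nth Vset_0 dbar_def)
  next
    case (Suc m)
    then show ?thesis
      by (simp only: wgf_Vset_Suc fps_X_mult_nth fps_add_nth fps_numeral_mult_nth
          fps_deriv_X_mult_nth) simp
  qed
qed

section \<open>Explicit coefficients\<close>

definition paths_ending_at :: "nat \<Rightarrow> int \<Rightarrow> real" where
  "paths_ending_at n h = (\<Sum>r\<in>Vset n. if final_height r = h then 1 else 0)"

text \<open>\<open>(2n choose n + h)\<close>, the number of paths of length \<open>n\<close> ending at height \<open>h\<close>; the
  negative-index case is split off because \<open>nat\<close> truncates.\<close>
definition shifted_central_binomial :: "nat \<Rightarrow> int \<Rightarrow> real" where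
  "shifted_central_binomial n h =
     (if int n + h < 0 then 0 else real ((2 * n) choose nat (int n + h)))"

lemma paths_ending_at_0: "paths_ending_at 0 h = (if h = 0 then 1 else 0)"
  by (simp add: paths_ending_at_def Vset_0)

lemma paths_ending_at_Suc:
  "paths_ending_at (Suc n) h =
     paths_ending_at n (h - 1) + paths_ending_at n (h + 1) + 2 * paths_ending_at n h"
  unfolding paths_ending_at_def sum_Vset_Suc_Cons
  by (simp add: sum.distrib sum_distrib_left algebra_simps flip: of_nat_sum)

lemma shifted_central_binomial_Suc:
  "shifted_central_binomial (Suc n) h =
     shifted_central_binomial n (h - 1) + shifted_central_binomial n (h + 1)
       + 2 * shifted_central_binomial n h"
proof -
  consider "int n + 1 + h < 0" | "int n + 1 + h = 0" | "int n + 1 + h = 1"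
    | k where "int n + 1 + h = int k + 2"
  proof -
    have "int n + 1 + h < 0 \<or> int n + 1 + h = 0 \<or> int n + 1 + h = 1
        \<or> int n + 1 + h = int (nat (int n + 1 + h - 2)) + 2"
      by linarith
    then show ?thesis
      using that by blast
  qed
  then show ?thesis
  proof cases
    case 2
    then have "h = - int n - 1"
      by simp
    then show ?thesis
      by (simp add: shifted_central_binomial_def)
  next
    case 3
    then have "h = - int n"
      by simp
    then show ?thesis
      by (simp add: shifted_central_binomial_def)
  next
    case 4
    then have "nat (int (Suc n) + h) = Suc (Suc k)" "nat (int n + (h - 1)) = k"
      "nat (int n + (h + 1)) = Suc (Suc k)" "nat (int n + h) = Suc k"
      by simp_all
    moreover have "2 * Suc n = Suc (Suc (2 * n))"
      by simp
    ultimately show ?thesis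
      using 4 by (simp add: shifted_central_binomial_def)
  qed (simp add: shifted_central_binomial_def)
qed

lemma paths_ending_at_eq: "paths_ending_at n h = shifted_central_binomial n h"
proof (induction n arbitrary: h)
  case 0
  then show ?case
    by (auto simp: paths_ending_at_0 shifted_central_binomial_def)
next
  case (Suc n)
  then show ?case
    by (simp add: paths_ending_at_Suc shifted_central_binomial_Suc)
qed

definition central_binomial :: "nat \<Rightarrow> real" where
  "central_binomial n = real ((2 * n) choose n)"

lemma paths_ending_at_origin: "paths_ending_at n 0 = central_binomial n"
  by (simp add: paths_ending_at_eq shifted_central_binomial_def central_binomial_def)

lemma central_binomial_Suc:
  "central_binomial (Suc n) = (4 * real n + 2) / (real n + 1) * central_binomial n"
proof -
  have "real (Suc n) * real (Suc (Suc (2 * n)) choose Suc n)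
      = real (Suc (Suc (2 * n))) * real (Suc (2 * n) choose n)"
    by (simp only: Suc_times_binomial flip: of_nat_mult)
  moreover have "real (Suc n) * real (Suc (2 * n) choose n)
      = real (Suc (2 * n)) * real ((2 * n) choose n)"
  proof -
    have "Suc (2 * n) - n = Suc n"
      by simp
    with binomial_absorb_comp[of "Suc (2 * n)" n]
    have "Suc n * (Suc (2 * n) choose n) = Suc (2 * n) * ((2 * n) choose n)"
      by (simp del: binomial_Suc_Suc)
    then show ?thesis
      by (metis of_nat_mult)
  qed
  moreover have "2 * Suc n = Suc (Suc (2 * n))"
    by simp
  ultimately show ?thesis
    unfolding central_binomial_def by (simp del: binomial_Suc_Suc add: field_simps)
qed

definition sum_abs_final_height :: "nat \<Rightarrow> real" where
  "sum_abs_final_height n = (\<Sum>r\<in>Vset n. real (nat \<bar>final_height r\<bar>))"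

lemma sum_abs_final_height_Suc:
  "sum_abs_final_height (Suc n) = 4 * sum_abs_final_height n + 2 * paths_ending_at n 0"
proof -
  have step: "real (nat \<bar>h + 1\<bar>) + real (nat \<bar>h - 1\<bar>) + 2 * real (nat \<bar>h\<bar>)
      = 4 * real (nat \<bar>h\<bar>) + 2 * (if h = 0 then 1 else 0)" for h :: int
    by (cases "0 < h"; cases "h = 0"; simp; linarith)
  have "sum_abs_final_height (Suc n) = (\<Sum>r\<in>Vset n. real (nat \<bar>final_height r + 1\<bar>)
      + real (nat \<bar>final_height r - 1\<bar>) + 2 * real (nat \<bar>final_height r\<bar>))"
    unfolding sum_abs_final_height_def sum_Vset_Suc_snoc by (simp add: add.assoc)
  then show ?thesis
    unfolding step
    by (simp add: sum_abs_final_height_def paths_ending_at_def sum.distrib sum_distrib_left)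
qed

lemma wgf_Vset_Suc_snoc:
  "fps_nth (wgf Vset) (Suc n) = 4 * fps_nth (wgf Vset) n + sum_abs_final_height (Suc n)"
proof -
  have "dbar (r @ [s]) = dbar r + nat \<bar>final_height r + step_height s\<bar>" for r s
    by (simp add: dbar_eq_abs_heights abs_heights_append)
  then show ?thesis
    unfolding wgf_nth sum_abs_final_height_def sum_Vset_Suc_snoc
    by (simp add: sum.distrib sum_distrib_left)
qed

lemma sum_abs_final_height_eq: "sum_abs_final_height n = real n * central_binomial n"
proof (induction n)
  case 0
  then show ?case
    by (simp add: sum_abs_final_height_def Vset_0)
next
  case (Suc n)
  then show ?case
    by (simp add: sum_abs_final_height_Suc paths_ending_at_origin central_binomial_Suc field_simps)
qed

lemma wgf_Vset_closed_form:
  "3 * fps_nth (wgf Vset) n = real n * (2 * real n + 1) * central_binomial n"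
proof (induction n)
  case 0
  then show ?case
    by (simp add: wgf_nth Vset_0 dbar_def)
next
  case (Suc n)
  have "3 * fps_nth (wgf Vset) (Suc n)
      = 4 * (3 * fps_nth (wgf Vset) n) + 3 * sum_abs_final_height (Suc n)"
    by (simp add: wgf_Vset_Suc_snoc)
  also have "\<dots> = 4 * (real n * (2 * real n + 1) * central_binomial n)
      + 3 * (real n + 1) * ((4 * real n + 2) / (real n + 1) * central_binomial n)"
    unfolding Suc.IH sum_abs_final_height_eq central_binomial_Suc by simp
  also have "\<dots> = real (Suc n) * (2 * real (Suc n) + 1) * central_binomial (Suc n)"
    unfolding central_binomial_Suc by (simp add: field_simps)
  finally show ?case .
qed

lemma gbinomial_minus_five_halves:
  "3 * (((-5/2) gchoose n) * (-4) ^ n) = (2 * real n + 1) * (2 * real n + 3) * central_binomial n"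
proof (induction n)
  case 0
  then show ?case
    by (simp add: central_binomial_def)
next
  case (Suc n)
  have "((-5/2 :: real) gchoose Suc n) = (-5/2 - real n) / (real n + 1) * ((-5/2) gchoose n)"
    using gbinomial_mult_1[of "-5/2 :: real" n] by (simp add: field_simps)
  then have "3 * (((-5/2) gchoose Suc n) * (-4) ^ Suc n)
      = 3 * (((-5/2) gchoose n) * (-4) ^ n) * (4 * real n + 10) / (real n + 1)"
    by (simp only:) (simp add: field_simps)
  also have "\<dots> = (2 * real n + 1) * (2 * real n + 3) * central_binomial n
      * (4 * real n + 10) / (real n + 1)"
    unfolding Suc.IH ..
  also have "\<dots> = (2 * real (Suc n) + 1) * (2 * real (Suc n) + 3) * central_binomial (Suc n)"
    unfolding central_binomial_Suc by (simp add: field_simps)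
  finally show ?case .
qed

lemma wgf_Vset_Suc_gbinomial: "fps_nth (wgf Vset) (Suc n) = 2 * (((-5/2) gchoose n) * (-4) ^ n)"
proof -
  have "3 * fps_nth (wgf Vset) (Suc n)
      = (real n + 1) * (2 * real n + 3) * central_binomial (Suc n)"
    using wgf_Vset_closed_form[of "Suc n"] by (simp add: algebra_simps)
  also have "\<dots> = 2 * ((2 * real n + 1) * (2 * real n + 3) * central_binomial n)"
    unfolding central_binomial_Suc by (simp add: field_simps)
  also have "\<dots> = 3 * (2 * (((-5/2) gchoose n) * (-4) ^ n))"
    unfolding gbinomial_minus_five_halves[symmetric] by simp
  finally show ?thesis
    by simp
qed

lemma wgf_Vset_sums:
  assumes "\<bar>x\<bar> < 1/4"
  shows "(\<lambda>n. fps_nth (wgf Vset) n * x ^ n) sums (2 * x * (1 - 4 * x) powr (-5/2))"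
proof -
  have "\<bar>-4 * x\<bar> < 1"
    using assms by simp
  from gen_binomial_real[OF this, of "-5/2"]
  have "(\<lambda>n. ((-5/2) gchoose n) * (-4) ^ n * x ^ n) sums ((1 - 4 * x) powr (-5/2))"
    by (simp add: mult.assoc flip: power_mult_distrib)
  from sums_mult[OF this, of "2 * x"]
  have "(\<lambda>n. fps_nth (wgf Vset) (Suc n) * x ^ Suc n) sums (2 * x * (1 - 4 * x) powr (-5/2))"
    by (simp add: wgf_Vset_Suc_gbinomial algebra_simps)
  then show ?thesis
    by (subst (asm) sums_Suc_iff) (simp add: wgf_nth Vset_0 dbar_def)
qed

lemma two_x_powr_minus_five_halves:
  fixes x :: real
  assumes "x < 1/4"
  shows "2 * x * (1 - 4 * x) powr (-5/2) =
    8 * x * (1 + sqrt (1 - 4 * x) - x * (3 + sqrt (1 - 4 * x)))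
      / ((1 - 4 * x) * (1 - 4 * x + sqrt (1 - 4 * x)) ^ 3)"
proof -
  define s where "s = sqrt (1 - 4 * x)"
  have pos: "0 < 1 - 4 * x"
    using assms by simp
  then have "0 < s" and s2: "s ^ 2 = 1 - 4 * x"
    by (simp_all add: s_def)
  have "(1 - 4 * x) powr (5/2) = (1 - 4 * x) powr (2 + 1/2)"
    by simp
  also have "\<dots> = (s ^ 2) ^ 2 * s"
    using pos by (simp only: powr_add) (simp add: powr_half_sqrt s_def)
  finally have powr: "(1 - 4 * x) powr (-5/2) = 1 / s ^ 5"
    by (simp add: powr_minus_divide power_mult[symmetric] power_Suc2[symmetric])
  have numerator: "4 * (1 + s - x * (3 + s)) = (1 + s) ^ 3"
  proof -
    have x4: "4 * x = 1 - s ^ 2"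
      using s2 by simp
    have "4 * (1 + s - x * (3 + s)) = 4 + 4 * s - (4 * x) * (3 + s)"
      by (simp add: algebra_simps)
    also have "\<dots> = (1 + s) ^ 3"
      unfolding x4 by (simp add: algebra_simps power2_eq_square power3_eq_cube)
    finally show ?thesis .
  qed
  have denominator: "(1 - 4 * x) * (1 - 4 * x + s) ^ 3 = s ^ 5 * (1 + s) ^ 3"
    unfolding s2[symmetric] by (simp add: algebra_simps power2_eq_square power3_eq_cube
        eval_nat_numeral)
  have "8 * x * (1 + s - x * (3 + s)) / ((1 - 4 * x) * (1 - 4 * x + s) ^ 3)
      = 2 * x * (4 * (1 + s - x * (3 + s))) / ((1 - 4 * x) * (1 - 4 * x + s) ^ 3)"
    by simp
  also have "\<dots> = 2 * x * (1 / s ^ 5)"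
    unfolding numerator denominator using \<open>0 < s\<close> by (simp add: field_simps)
  finally show ?thesis
    unfolding powr s_def by simp
qed

theorem proposition6p4:
  shows "wgf Vset = 2 * fps_X * wgf Vset
            + 2 * fps_X ^ 2 * wgf Mset * gf Vset
            + 2 * fps_X ^ 2 * gf Mset * wgf Vset
            + 2 * fps_X ^ 2 * gf Vset * fps_deriv (fps_X * gf Mset)
            + 2 * fps_X * wgf Nset
            + 2 * fps_X * fps_deriv (fps_X * gf Nset)
         \<and> (\<forall>x::real. \<bar>x\<bar> < 1/4 \<longrightarrow>
           (\<lambda>n. fps_nth (wgf Vset) n * x ^ n) sums
             (8 * x * (1 + sqrt (1 - 4*x) - x * (3 + sqrt (1 - 4*x)))
              / ((1 - 4*x) * (1 - 4*x + sqrt (1 - 4*x)) ^ 3)))"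
proof (intro conjI allI impI)
  show "wgf Vset = 2 * fps_X * wgf Vset
            + 2 * fps_X ^ 2 * wgf Mset * gf Vset
            + 2 * fps_X ^ 2 * gf Mset * wgf Vset
            + 2 * fps_X ^ 2 * gf Vset * fps_deriv (fps_X * gf Mset)
            + 2 * fps_X * wgf Nset
            + 2 * fps_X * fps_deriv (fps_X * gf Nset)"
    by (rule functional_equation)
next
  fix x :: real
  assume x: "\<bar>x\<bar> < 1/4"
  then have "x < 1/4"
    by (simp add: abs_less_iff)
  from wgf_Vset_sums[OF x]
  show "(\<lambda>n. fps_nth (wgf Vset) n * x ^ n) sums
      (8 * x * (1 + sqrt (1 - 4*x) - x * (3 + sqrt (1 - 4*x)))
        / ((1 - 4*x) * (1 - 4*x + sqrt (1 - 4*x)) ^ 3))"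
    unfolding two_x_powr_minus_five_halves[OF \<open>x < 1/4\<close>] .
qed

end
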